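(* Let $I\subseteq\mathbb{R}$ be an open interval and let $f$ be a non-constant real analytic function on $I$ with $f(\mathbb{Q}\cap I)\subseteq\mathbb{Q}$. Assume that there exists a function $\psi:\mathbb{R}_{>0}\to\mathbb{R}_{>0}$ with the following properties: (i) $\psi(m)=o(m)$ as $m\to\infty$; (ii) for every $\zeta\in\mathscr{L}\cap I$ and every integer $m\geq 1$ one can find coprime integers $p_m,q_m\geq 2$ such that $\left|\zeta-\frac{p_m}{q_m}\right|\leq q_m^{-m}$ and, writing $f(p_m/q_m)=p_m'/q_m'$ in lowest terms, one has $q_m'\leq q_m^{\psi(m)}$. Then $f(\mathscr{L}\cap I)\subseteq\mathscr{L}$.
   Context: $\mathscr{L}$ denotes the set of Liouville numbers: real irrational numbers $\zeta$ such that for every $\eta>0$ the inequality $|\zeta-y/x|\leq x^{-\eta}$ has infinitely many rational solutions $y/x$ with $x\geq 1$ (equivalently, real numbers with infinite irrationality exponent). For a set $A$, $f(A)=\{f(x):x\in A\}$. *)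

theory Defs
  imports "HOL-Analysis.Analysis" "HOL-Library.Landau_Symbols"
begin

definition Liouville :: "real set" where
  "Liouville = {\<zeta>. \<zeta> \<notin> \<rat> \<and>
     (\<forall>\<eta>::real. \<eta> > 0 \<longrightarrow>
        infinite {(y::int, x::int). x \<ge> 1 \<and> \<bar>\<zeta> - real_of_int y / real_of_int x\<bar> \<le> real_of_int x powr (-\<eta>)})}"

definition real_analytic_on :: "(real \<Rightarrow> real) \<Rightarrow> real set \<Rightarrow> bool" where
  "real_analytic_on f I \<longleftrightarrow>
     (\<forall>x0\<in>I. \<exists>r>0. \<exists>a::nat \<Rightarrow> real.
        \<forall>x. \<bar>x - x0\<bar> < r \<longrightarrow> (\<lambda>n. a n * (x - x0) ^ n) sums f x)"

end

theory Submission
  imports Defs "HOL-Complex_Analysis.Cauchy_Integral_Formula" "HOL-Real_Asymp.Real_Asymp"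
begin

(* Near a Liouville number zeta the analytic function f is Lipschitz, so an approximation
   |zeta - p/q| <= q^-m yields the rational f(p/q) = p'/q' with |f zeta - p'/q'| <= C q^-m and,
   by hypothesis, q' <= q^psi(m). Since psi(m) = o(m), the error C q^-m eventually drops below
   q'^-eta for every eta, so f zeta is a Liouville number as soon as it is irrational.
   If f zeta = u/v were rational, every p'/q' /= u/v would lie at distance >= 1/(v q') from it,
   which again beats the error; hence f(p/q) = f zeta for rationals p/q accumulating at zeta,
   and the identity theorem would make f constant on I. *)

lemma real_analytic_on_lipschitz_at:
  assumes "real_analytic_on f I" and "x0 \<in> I"
  obtains d C where "d > 0" and "C > 0"
    and "\<And>y. \<bar>y - x0\<bar> < d \<Longrightarrow> \<bar>f y - f x0\<bar> \<le> C * \<bar>y - x0\<bar>"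
proof -
  obtain r a where "r > 0" and sums_f: "\<And>x. \<bar>x - x0\<bar> < r \<Longrightarrow> (\<lambda>n. a n * (x - x0) ^ n) sums f x"
    using assms unfolding real_analytic_on_def by blast
  define G where "G h = (\<Sum>n. a (Suc n) * h ^ n)" for h
  have "summable (\<lambda>n. a n * (r / 2) ^ n)"
    using sums_f[of "x0 + r / 2"] \<open>r > 0\<close> by (simp add: sums_summable)
  then have "summable (\<lambda>n. a (Suc n) * (r / 2) ^ n)"
    by (rule summable_powser_split_head[THEN iffD2])
  then have "isCont G 0"
    unfolding G_def by (rule isCont_powser) (use \<open>r > 0\<close> in simp)
  \<comment> \<open>\<open>G\<close> is the difference quotient of \<open>f\<close> at \<open>x0\<close>, extended continuously to \<open>0\<close>.\<close>
  have f_eq: "f y = f x0 + G (y - x0) * (y - x0)" if "\<bar>y - x0\<bar> < r" for y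
  proof -
    have "f y = (\<Sum>n. a n * (y - x0) ^ n)" and "summable (\<lambda>n. a n * (y - x0) ^ n)"
      using sums_f[OF that] by (auto simp: sums_iff)
    moreover have "f x0 = a 0"
      using sums_f[of x0] \<open>r > 0\<close> by (simp add: sums_iff)
    ultimately show ?thesis
      using powser_split_head(1) by (simp add: G_def)
  qed
  have "\<exists>e>0. \<forall>h. dist h 0 < e \<longrightarrow> dist (G h) (G 0) < 1"
    using \<open>isCont G 0\<close> continuous_at_eps_delta zero_less_one by blast
  then obtain e where "e > 0" and G_near: "\<And>h. \<bar>h\<bar> < e \<Longrightarrow> \<bar>G h - G 0\<bar> < 1"
    by (auto simp: dist_real_def)
  show ?thesis
  proof
    show "min e r > 0" and "\<bar>G 0\<bar> + 1 > 0"
      using \<open>e > 0\<close> \<open>r > 0\<close> by auto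
    fix y assume y: "\<bar>y - x0\<bar> < min e r"
    have "\<bar>f y - f x0\<bar> = \<bar>G (y - x0)\<bar> * \<bar>y - x0\<bar>"
      using f_eq[of y] y by (simp add: abs_mult)
    also have "\<dots> \<le> (\<bar>G 0\<bar> + 1) * \<bar>y - x0\<bar>"
      using G_near[of "y - x0"] y by (intro mult_right_mono) auto
    finally show "\<bar>f y - f x0\<bar> \<le> (\<bar>G 0\<bar> + 1) * \<bar>y - x0\<bar>" .
  qed
qed

lemma real_analytic_on_eventually_eq_if_islimpt:
  assumes an: "real_analytic_on f I" and "x0 \<in> I" and limpt: "x0 islimpt {z. f z = c}"
  shows "eventually (\<lambda>y. f y = c) (nhds x0)"
proof -
  have "f x0 = c"
  proof (rule ccontr)
    assume "f x0 \<noteq> c"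
    obtain d C where "d > 0" "C > 0" and lip: "\<And>y. \<bar>y - x0\<bar> < d \<Longrightarrow> \<bar>f y - f x0\<bar> \<le> C * \<bar>y - x0\<bar>"
      using real_analytic_on_lipschitz_at[OF an \<open>x0 \<in> I\<close>] by blast
    define e where "e = min d (\<bar>f x0 - c\<bar> / C)"
    have "e > 0"
      using \<open>d > 0\<close> \<open>C > 0\<close> \<open>f x0 \<noteq> c\<close> by (simp add: e_def)
    then obtain z where "f z = c" and z: "dist z x0 < e"
      using limpt unfolding islimpt_approachable by blast
    have "\<bar>f z - f x0\<bar> \<le> C * \<bar>z - x0\<bar>"
      using lip z by (simp add: e_def dist_real_def)
    also have "\<dots> < C * (\<bar>f x0 - c\<bar> / C)"
      using z \<open>C > 0\<close> by (intro mult_strict_left_mono) (auto simp: e_def dist_real_def)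
    also have "\<dots> = \<bar>f z - f x0\<bar>"
      using \<open>f z = c\<close> \<open>C > 0\<close> by (simp add: abs_minus_commute)
    finally show False by simp
  qed
  obtain r a where "r > 0" and sums_f: "\<And>x. \<bar>x - x0\<bar> < r \<Longrightarrow> (\<lambda>n. a n * (x - x0) ^ n) sums f x"
    using an \<open>x0 \<in> I\<close> unfolding real_analytic_on_def by blast
  define b where "b n = (if n = 0 then a 0 - c else a n)" for n
  have sums_b: "(\<lambda>n. b n * (x - x0) ^ n) sums (f x - c)" if "norm (x - x0) < r" for x
  proof -
    have "(\<lambda>n. a n * (x - x0) ^ n - (if n = 0 then c else 0)) sums (f x - c)"
      using sums_diff[OF sums_f sums_single[of 0 "\<lambda>_. c"]] that by simp
    moreover have "(\<lambda>n. a n * (x - x0) ^ n - (if n = 0 then c else 0)) = (\<lambda>n. b n * (x - x0) ^ n)"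
      by (auto simp: b_def)
    ultimately show ?thesis by simp
  qed
  \<comment> \<open>All higher coefficients vanish: otherwise \<open>x0\<close> would be an isolated zero of \<open>f - c\<close>.\<close>
  have a_Suc: "a n = 0" if "n > 0" for n
  proof (rule ccontr)
    assume "a n \<noteq> 0"
    with that obtain s where "s > 0" and nonzero: "\<And>z. z \<in> cball x0 s - {x0} \<Longrightarrow> f z - c \<noteq> 0"
      using powser_0_nonzero[where a = b and r = r and \<xi> = x0 and f = "\<lambda>x. f x - c" and m = n]
        \<open>r > 0\<close> sums_b \<open>f x0 = c\<close>
      by (auto simp: b_def)
    obtain z where "f z = c" "z \<noteq> x0" "dist z x0 < s"
      using limpt \<open>s > 0\<close> unfolding islimpt_approachable by auto
    with nonzero[of z] show False by (auto simp: dist_commute)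
  qed
  have "f y = c" if "dist y x0 < r" for y
  proof -
    have "(\<lambda>n. a n * (y - x0) ^ n) = (\<lambda>n. if n = 0 then a 0 else 0)"
      using a_Suc by auto
    then have "f y = a 0"
      using sums_f[of y] sums_single[of 0 "\<lambda>_. a 0"] that
      by (auto simp: dist_real_def sums_iff)
    moreover have "f x0 = a 0"
      using sums_f[of x0] \<open>r > 0\<close> by (simp add: sums_iff)
    ultimately show ?thesis using \<open>f x0 = c\<close> by simp
  qed
  then show ?thesis
    unfolding eventually_nhds_metric using \<open>r > 0\<close> by blast
qed

lemma real_analytic_on_const_if_islimpt:
  assumes an: "real_analytic_on f I" and "open I" and "connected I"
    and "x0 \<in> I" and "x0 islimpt {z. f z = c}" and "x \<in> I"
  shows "f x = c"
proof -
  define S where "S = I \<inter> interior {z. f z = c}"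
  have "closedin (top_of_set I) S"
    unfolding closedin_closed
  proof (intro exI conjI)
    show "S = I \<inter> closure S"
    proof (rule equalityI)
      show "S \<subseteq> I \<inter> closure S"
        using closure_subset[of S] by (auto simp: S_def)
      show "I \<inter> closure S \<subseteq> S"
      proof
        fix y assume y: "y \<in> I \<inter> closure S"
        have "y \<in> S \<or> y islimpt {z. f z = c}"
          using y islimpt_subset[of y S] interior_subset[of "{z. f z = c}"]
          by (auto simp: closure_def S_def)
        then show "y \<in> S"
          using real_analytic_on_eventually_eq_if_islimpt[OF an, of y c] y
          by (auto simp: S_def interior_def eventually_nhds)
      qed
    qed
  qed simp
  moreover have "openin (top_of_set I) S"
    using \<open>open I\<close> by (auto simp: S_def intro: open_openin_trans)
  moreover have "x0 \<in> S"
    using real_analytic_on_eventually_eq_if_islimpt[OF an assms(4,5)] \<open>x0 \<in> I\<close>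
    by (auto simp: S_def interior_def eventually_nhds)
  ultimately have "S = I"
    using \<open>connected I\<close> unfolding connected_clopen by blast
  then show ?thesis
    using \<open>x \<in> I\<close> interior_subset by (auto simp: S_def)
qed

lemma Liouville_if_approximable:
  assumes "\<zeta> \<notin> \<rat>"
    and approx: "\<And>\<eta> \<epsilon>. \<eta> > 0 \<Longrightarrow> \<epsilon> > 0 \<Longrightarrow> \<exists>y x :: int. x \<ge> 1
        \<and> \<bar>\<zeta> - real_of_int y / real_of_int x\<bar> < \<epsilon>
        \<and> \<bar>\<zeta> - real_of_int y / real_of_int x\<bar> \<le> real_of_int x powr (- \<eta>)"
  shows "\<zeta> \<in> Liouville"
proof -
  have "infinite {(y::int, x::int). x \<ge> 1
      \<and> \<bar>\<zeta> - real_of_int y / real_of_int x\<bar> \<le> real_of_int x powr (- \<eta>)}" (is "infinite ?A")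
    if "\<eta> > 0" for \<eta>
  proof
    let ?fractions = "(\<lambda>(y, x). real_of_int y / real_of_int x) ` ?A"
    assume "finite ?A"
    then obtain \<delta> where "\<delta> > 0" and far: "\<forall>r \<in> ?fractions. r \<noteq> \<zeta> \<longrightarrow> \<delta> \<le> dist \<zeta> r"
      using finite_set_avoid[OF finite_imageI, of ?A _ \<zeta>] by blast
    obtain y x :: int where "x \<ge> 1" and close: "\<bar>\<zeta> - real_of_int y / real_of_int x\<bar> < \<delta>"
      and "\<bar>\<zeta> - real_of_int y / real_of_int x\<bar> \<le> real_of_int x powr (- \<eta>)"
      using approx[OF \<open>\<eta> > 0\<close> \<open>\<delta> > 0\<close>] by blast
    then have "(y, x) \<in> ?A"
      by simp
    then have "real_of_int y / real_of_int x \<in> ?fractions"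
      by (rule rev_image_eqI) simp
    moreover have "real_of_int y / real_of_int x \<noteq> \<zeta>"
      using \<open>\<zeta> \<notin> \<rat>\<close> Rats_divide Rats_of_int by metis
    ultimately have "\<delta> \<le> dist \<zeta> (real_of_int y / real_of_int x)"
      using far by blast
    with close show False
      by (simp add: dist_real_def)
  qed
  with \<open>\<zeta> \<notin> \<rat>\<close> show ?thesis
    unfolding Liouville_def by blast
qed

lemma abs_diff_fractions_ge:
  fixes a b c d :: int
  assumes "b > 0" and "d > 0" and "real_of_int a / real_of_int b \<noteq> real_of_int c / real_of_int d"
  shows "1 / (real_of_int b * real_of_int d) \<le> \<bar>real_of_int a / real_of_int b - real_of_int c / real_of_int d\<bar>"
proof -
  have "real_of_int (a * d - c * b) \<noteq> 0"
    using assms by (simp add: frac_eq_eq)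
  then have "1 \<le> \<bar>a * d - c * b\<bar>"
    by linarith
  then have "1 \<le> \<bar>real_of_int (a * d - c * b)\<bar>"
    by linarith
  then have "1 / (real_of_int b * real_of_int d) \<le> \<bar>real_of_int (a * d - c * b)\<bar> / (real_of_int b * real_of_int d)"
    using assms by (intro divide_right_mono) auto
  also have "\<dots> = \<bar>real_of_int a / real_of_int b - real_of_int c / real_of_int d\<bar>"
    using assms by (simp add: diff_frac_eq abs_divide)
  finally show ?thesis .
qed

lemma smallo_id_eventually_le:
  fixes \<psi> :: "real \<Rightarrow> real"
  assumes "\<psi> \<in> o[at_top](\<lambda>m. m)" and "c > 0"
  shows "\<forall>\<^sub>F m in sequentially. \<psi> (real m) \<le> c * real m"
proof -
  have "\<forall>\<^sub>F x in at_top. \<psi> x \<le> c * x"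
    using landau_o.smallD[OF assms] eventually_ge_at_top[of 0]
    by eventually_elim simp
  then show ?thesis
    using eventually_compose_filterlim filterlim_real_sequentially by blast
qed

lemma powr_neg_le_height_powr:
  fixes q q' m \<eta> \<psi> :: real
  assumes "q \<ge> 2" and "q' > 0" and "q' \<le> q powr \<psi>" and "\<eta> > 0" and "\<eta> * \<psi> \<le> m / 2" and "m \<ge> 0"
  shows "q powr (- m) \<le> 2 powr (- m / 2) * q' powr (- \<eta>)"
proof -
  have "q powr (- m / 2) \<le> 2 powr (- m / 2)"
    using assms by (intro powr_mono2') auto
  have "q powr (- m / 2) \<le> q powr (- (\<eta> * \<psi>))"
    using assms by (intro powr_mono) auto
  also have "\<dots> = (q powr \<psi>) powr (- \<eta>)"
    by (simp add: powr_powr mult.commute)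
  also have "\<dots> \<le> q' powr (- \<eta>)"
    using assms by (intro powr_mono2') auto
  finally have "q powr (- m / 2) \<le> q' powr (- \<eta>)" .
  have "q powr (- m) = q powr (- m / 2) * q powr (- m / 2)"
    by (simp flip: powr_add)
  also have "\<dots> \<le> 2 powr (- m / 2) * q' powr (- \<eta>)"
    using assms \<open>q powr (- m / 2) \<le> 2 powr (- m / 2)\<close> \<open>q powr (- m / 2) \<le> q' powr (- \<eta>)\<close>
    by (intro mult_mono) auto
  finally show ?thesis .
qed

definition rat_approximable_with_image_height :: "(real \<Rightarrow> real) \<Rightarrow> (real \<Rightarrow> real) \<Rightarrow> real \<Rightarrow> bool" where
  "rat_approximable_with_image_height f \<psi> \<zeta> \<longleftrightarrow>
     (\<forall>m::nat \<ge> 1. \<exists>p q :: int. q \<ge> 2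
        \<and> \<bar>\<zeta> - real_of_int p / real_of_int q\<bar> \<le> real_of_int q powr (- real m)
        \<and> (\<exists>p' q' :: int. q' > 0
             \<and> f (real_of_int p / real_of_int q) = real_of_int p' / real_of_int q'
             \<and> real_of_int q' \<le> real_of_int q powr \<psi> (real m)))"

lemma rat_approximable_with_image_height_close:
  assumes lip: "\<And>y. \<bar>y - \<zeta>\<bar> < d \<Longrightarrow> \<bar>f y - f \<zeta>\<bar> \<le> C * \<bar>y - \<zeta>\<bar>" and "C \<ge> 0"
    and "rat_approximable_with_image_height f \<psi> \<zeta>" and "m \<ge> 1" and "2 powr (- real m) < d"
  obtains p q p' q' :: int where "q \<ge> 2" and "q' > 0"
    and "\<bar>real_of_int p / real_of_int q - \<zeta>\<bar> \<le> 2 powr (- real m)"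
    and "f (real_of_int p / real_of_int q) = real_of_int p' / real_of_int q'"
    and "real_of_int q' \<le> real_of_int q powr \<psi> (real m)"
    and "\<bar>real_of_int p' / real_of_int q' - f \<zeta>\<bar> \<le> C * real_of_int q powr (- real m)"
proof -
  obtain p q p' q' :: int where "q \<ge> 2" and "q' > 0"
    and close: "\<bar>real_of_int p / real_of_int q - \<zeta>\<bar> \<le> real_of_int q powr (- real m)"
    and image: "f (real_of_int p / real_of_int q) = real_of_int p' / real_of_int q'"
    and height: "real_of_int q' \<le> real_of_int q powr \<psi> (real m)"
    using assms(3,4) unfolding rat_approximable_with_image_height_def abs_minus_commute[of \<zeta>]
    by blast
  have "real_of_int q powr (- real m) \<le> 2 powr (- real m)"
    using \<open>q \<ge> 2\<close> by (intro powr_mono2') auto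
  with close have close': "\<bar>real_of_int p / real_of_int q - \<zeta>\<bar> \<le> 2 powr (- real m)"
    by linarith
  have "\<bar>real_of_int p' / real_of_int q' - f \<zeta>\<bar> \<le> C * \<bar>real_of_int p / real_of_int q - \<zeta>\<bar>"
    using lip[of "real_of_int p / real_of_int q"] close' \<open>2 powr (- real m) < d\<close> image by simp
  also have "\<dots> \<le> C * real_of_int q powr (- real m)"
    using close \<open>C \<ge> 0\<close> by (intro mult_left_mono)
  finally show ?thesis
    using that \<open>q \<ge> 2\<close> \<open>q' > 0\<close> close' image height by blast
qed

lemma Liouville_image_if_approximable:
  fixes f \<psi> :: "real \<Rightarrow> real"
  assumes lip: "\<And>y. \<bar>y - \<zeta>\<bar> < d \<Longrightarrow> \<bar>f y - f \<zeta>\<bar> \<le> C * \<bar>y - \<zeta>\<bar>" and "d > 0" and "C > 0"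
    and "f \<zeta> \<notin> \<rat>" and psi: "\<psi> \<in> o[at_top](\<lambda>m. m)"
    and approx: "rat_approximable_with_image_height f \<psi> \<zeta>"
  shows "f \<zeta> \<in> Liouville"
proof (rule Liouville_if_approximable[OF \<open>f \<zeta> \<notin> \<rat>\<close>])
  fix \<eta> \<epsilon> :: real
  assume "\<eta> > 0" and "\<epsilon> > 0"
  have "\<forall>\<^sub>F m in sequentially. \<psi> (real m) \<le> 1 / (2 * \<eta>) * real m"
    by (rule smallo_id_eventually_le[OF psi]) (use \<open>\<eta> > 0\<close> in simp)
  moreover have "\<forall>\<^sub>F m in sequentially. 2 powr (- real m) < d"
    using \<open>d > 0\<close> by real_asymp
  moreover have "\<forall>\<^sub>F m in sequentially. C * 2 powr (- real m) < \<epsilon>"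
    using \<open>\<epsilon> > 0\<close> by real_asymp
  moreover have "\<forall>\<^sub>F m in sequentially. C * 2 powr (- real m / 2) \<le> 1"
    by real_asymp
  ultimately have "\<forall>\<^sub>F m in sequentially. m \<ge> 1 \<and> \<psi> (real m) \<le> 1 / (2 * \<eta>) * real m
      \<and> 2 powr (- real m) < d \<and> C * 2 powr (- real m) < \<epsilon> \<and> C * 2 powr (- real m / 2) \<le> 1"
    using eventually_ge_at_top[of 1] by eventually_elim blast
  then obtain m :: nat where "m \<ge> 1" and psi_m: "\<psi> (real m) \<le> 1 / (2 * \<eta>) * real m"
    and "2 powr (- real m) < d" and "C * 2 powr (- real m) < \<epsilon>" and "C * 2 powr (- real m / 2) \<le> 1"
    unfolding eventually_sequentially by blast
  then obtain p q p' q' :: int where "q \<ge> 2" and "q' > 0"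
    and height: "real_of_int q' \<le> real_of_int q powr \<psi> (real m)"
    and err: "\<bar>real_of_int p' / real_of_int q' - f \<zeta>\<bar> \<le> C * real_of_int q powr (- real m)"
    using rat_approximable_with_image_height_close[where d = d, OF lip less_imp_le[OF \<open>C > 0\<close>] approx
        \<open>m \<ge> 1\<close> \<open>2 powr (- real m) < d\<close>]
    by blast
  have "C * real_of_int q powr (- real m) \<le> C * 2 powr (- real m)"
    using \<open>q \<ge> 2\<close> \<open>C > 0\<close> by (intro mult_left_mono powr_mono2') auto
  with \<open>C * 2 powr (- real m) < \<epsilon>\<close> have small: "C * real_of_int q powr (- real m) < \<epsilon>"
    by linarith
  have "C * real_of_int q powr (- real m) \<le> C * (2 powr (- real m / 2) * real_of_int q' powr (- \<eta>))"
    using \<open>q \<ge> 2\<close> \<open>q' > 0\<close> height psi_m \<open>\<eta> > 0\<close> \<open>C > 0\<close>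
    by (intro mult_left_mono powr_neg_le_height_powr) (auto simp: field_simps)
  also have "\<dots> \<le> real_of_int q' powr (- \<eta>)"
    using mult_right_mono[OF \<open>C * 2 powr (- real m / 2) \<le> 1\<close>, of "real_of_int q' powr (- \<eta>)"]
    by (simp add: mult.assoc)
  finally have "C * real_of_int q powr (- real m) \<le> real_of_int q' powr (- \<eta>)" .
  with err small \<open>q' > 0\<close> show "\<exists>y x :: int. x \<ge> 1
      \<and> \<bar>f \<zeta> - real_of_int y / real_of_int x\<bar> < \<epsilon>
      \<and> \<bar>f \<zeta> - real_of_int y / real_of_int x\<bar> \<le> real_of_int x powr (- \<eta>)"
    by (intro exI[of _ p'] exI[of _ q'] conjI) (auto simp: abs_minus_commute)
qed

lemma real_analytic_image_not_Rats:
  fixes f \<psi> :: "real \<Rightarrow> real"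
  assumes an: "real_analytic_on f I" and "open I" and "connected I"
    and nonconst: "\<not> (\<exists>c. \<forall>x\<in>I. f x = c)" and "\<zeta> \<in> I" and "\<zeta> \<notin> \<rat>"
    and psi: "\<psi> \<in> o[at_top](\<lambda>m. m)" and approx: "rat_approximable_with_image_height f \<psi> \<zeta>"
  shows "f \<zeta> \<notin> \<rat>"
proof
  assume "f \<zeta> \<in> \<rat>"
  then obtain u v :: int where "v > 0" and f_\<zeta>: "f \<zeta> = real_of_int u / real_of_int v"
    by (metis Rats_cases')
  obtain d C where "d > 0" and "C > 0"
    and lip: "\<And>y. \<bar>y - \<zeta>\<bar> < d \<Longrightarrow> \<bar>f y - f \<zeta>\<bar> \<le> C * \<bar>y - \<zeta>\<bar>"
    using real_analytic_on_lipschitz_at[OF an \<open>\<zeta> \<in> I\<close>] by blast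
  \<comment> \<open>A value \<open>p'/q' \<noteq> u/v\<close> differs from \<open>f \<zeta>\<close> by at least \<open>1/(q' v)\<close>, more than the
    approximation error allows; so the approximants are zeros of \<open>f - f \<zeta>\<close> accumulating at \<open>\<zeta>\<close>.\<close>
  have "\<zeta> islimpt {z. f z = f \<zeta>}"
    unfolding islimpt_approachable
  proof (intro allI impI)
    fix e :: real
    assume "e > 0"
    have "\<forall>\<^sub>F m in sequentially. \<psi> (real m) \<le> 1 / 2 * real m"
      by (rule smallo_id_eventually_le[OF psi]) simp
    moreover have "\<forall>\<^sub>F m in sequentially. 2 powr (- real m) < min e d"
      using \<open>e > 0\<close> \<open>d > 0\<close> by real_asymp
    moreover have "\<forall>\<^sub>F m in sequentially. C * real_of_int v * 2 powr (- real m / 2) < 1"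
      by real_asymp
    ultimately have "\<forall>\<^sub>F m in sequentially. m \<ge> 1 \<and> \<psi> (real m) \<le> 1 / 2 * real m
        \<and> 2 powr (- real m) < min e d \<and> C * real_of_int v * 2 powr (- real m / 2) < 1"
      using eventually_ge_at_top[of 1] by eventually_elim blast
    then obtain m :: nat where "m \<ge> 1" and psi_m: "\<psi> (real m) \<le> 1 / 2 * real m"
      and "2 powr (- real m) < min e d" and small: "C * real_of_int v * 2 powr (- real m / 2) < 1"
      unfolding eventually_sequentially by blast
    have "2 powr (- real m) < d"
      using \<open>2 powr (- real m) < min e d\<close> by simp
    obtain p q p' q' :: int where "q \<ge> 2" and "q' > 0"
      and close: "\<bar>real_of_int p / real_of_int q - \<zeta>\<bar> \<le> 2 powr (- real m)"
      and image: "f (real_of_int p / real_of_int q) = real_of_int p' / real_of_int q'"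
      and height: "real_of_int q' \<le> real_of_int q powr \<psi> (real m)"
      and err: "\<bar>real_of_int p' / real_of_int q' - f \<zeta>\<bar> \<le> C * real_of_int q powr (- real m)"
      using rat_approximable_with_image_height_close[where d = d, OF lip less_imp_le[OF \<open>C > 0\<close>] approx
          \<open>m \<ge> 1\<close> \<open>2 powr (- real m) < d\<close>]
      by metis
    have "f (real_of_int p / real_of_int q) = f \<zeta>"
    proof (rule ccontr)
      assume "f (real_of_int p / real_of_int q) \<noteq> f \<zeta>"
      then have "1 / (real_of_int q' * real_of_int v) \<le> \<bar>real_of_int p' / real_of_int q' - f \<zeta>\<bar>"
        unfolding image f_\<zeta> by (rule abs_diff_fractions_ge[OF \<open>q' > 0\<close> \<open>v > 0\<close>])
      also have "\<dots> \<le> C * real_of_int q powr (- real m)"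
        by (rule err)
      also have "\<dots> \<le> C * (2 powr (- real m / 2) * real_of_int q' powr (- 1))"
        using \<open>q \<ge> 2\<close> \<open>q' > 0\<close> height psi_m \<open>C > 0\<close>
        by (intro mult_left_mono powr_neg_le_height_powr) auto
      finally have "1 / (real_of_int q' * real_of_int v) \<le> C * 2 powr (- real m / 2) / q'"
        using \<open>q' > 0\<close> by (simp add: powr_minus_divide)
      then have "1 \<le> C * real_of_int v * 2 powr (- real m / 2)"
        using \<open>q' > 0\<close> \<open>v > 0\<close> by (simp add: field_simps)
      with small show False
        by linarith
    qed
    moreover have "real_of_int p / real_of_int q \<noteq> \<zeta>"
      using \<open>\<zeta> \<notin> \<rat>\<close> Rats_divide Rats_of_int by metis
    moreover have "dist (real_of_int p / real_of_int q) \<zeta> < e"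
      using close \<open>2 powr (- real m) < min e d\<close> by (simp add: dist_real_def)
    ultimately show "\<exists>z \<in> {z. f z = f \<zeta>}. z \<noteq> \<zeta> \<and> dist z \<zeta> < e"
      by blast
  qed
  then have "\<forall>x\<in>I. f x = f \<zeta>"
    using real_analytic_on_const_if_islimpt[OF an \<open>open I\<close> \<open>connected I\<close> \<open>\<zeta> \<in> I\<close>] by blast
  with nonconst show False
    by blast
qed

theorem theorem2p1:
  fixes f :: "real \<Rightarrow> real" and I :: "real set" and \<psi> :: "real \<Rightarrow> real"
  assumes I_open: "open I" and I_interval: "is_interval I" and I_ne: "I \<noteq> {}"
    and analytic: "real_analytic_on f I"
    and nonconst: "\<not> (\<exists>c. \<forall>x\<in>I. f x = c)"
    and rat_to_rat: "f ` (\<rat> \<inter> I) \<subseteq> \<rat>"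
    and psi_pos: "\<forall>m>0. \<psi> m > 0"
    and psi_o: "\<psi> \<in> o[at_top](\<lambda>m. m)"
    and approx: "\<forall>\<zeta> \<in> Liouville \<inter> I. \<forall>m::nat. m \<ge> 1 \<longrightarrow>
       (\<exists>p q :: int. p \<ge> 2 \<and> q \<ge> 2 \<and> coprime p q
          \<and> real_of_int p / real_of_int q \<in> I
          \<and> \<bar>\<zeta> - real_of_int p / real_of_int q\<bar> \<le> real_of_int q powr (- real m)
          \<and> (\<exists>p' q' :: int. q' > 0 \<and> coprime p' q'
               \<and> f (real_of_int p / real_of_int q) = real_of_int p' / real_of_int q'
               \<and> real_of_int q' \<le> real_of_int q powr \<psi> (real m)))"
  shows "f ` (Liouville \<inter> I) \<subseteq> Liouville"
proof
  fix w
  assume "w \<in> f ` (Liouville \<inter> I)"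
  then obtain \<zeta> where "\<zeta> \<in> Liouville" and "\<zeta> \<in> I" and "w = f \<zeta>"
    by blast
  have "\<zeta> \<notin> \<rat>"
    using \<open>\<zeta> \<in> Liouville\<close> by (simp add: Liouville_def)
  have approx_\<zeta>: "rat_approximable_with_image_height f \<psi> \<zeta>"
    using approx \<open>\<zeta> \<in> Liouville\<close> \<open>\<zeta> \<in> I\<close> unfolding rat_approximable_with_image_height_def
    by blast
  obtain d C where "d > 0" and "C > 0"
    and lip: "\<And>y. \<bar>y - \<zeta>\<bar> < d \<Longrightarrow> \<bar>f y - f \<zeta>\<bar> \<le> C * \<bar>y - \<zeta>\<bar>"
    using real_analytic_on_lipschitz_at[OF analytic \<open>\<zeta> \<in> I\<close>] by blast
  have "f \<zeta> \<notin> \<rat>"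
    using real_analytic_image_not_Rats[OF analytic I_open is_interval_connected[OF I_interval]
        nonconst \<open>\<zeta> \<in> I\<close> \<open>\<zeta> \<notin> \<rat>\<close> psi_o approx_\<zeta>] .
  then show "w \<in> Liouville"
    unfolding \<open>w = f \<zeta>\<close> using Liouville_image_if_approximable[OF lip \<open>d > 0\<close> \<open>C > 0\<close> _ psi_o approx_\<zeta>]
    by blast
qed

end
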